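(* Let $\ell\ge1$ and let $G$ be a finite subgraph of the $\mathbb{Z}^\ell$ lattice. Then $\tilde{H}_k(\operatorname{ind}(G);\mathbf{k})=0$ for all $k<\frac{|V(G)|}{2\ell+1}-1$.
   Context: $\mathbf{k}$ is a fixed field. The $\mathbb{Z}^\ell$ lattice is the infinite graph whose vertices are the integer points of $\mathbb{R}^\ell$, two being adjacent when at Euclidean distance $1$. $\operatorname{ind}(G)$ is the simplicial complex on $V(G)$ whose faces are the independent sets of $G$, and $\tilde H_k$ is reduced simplicial homology with coefficients in $\mathbf{k}$. *)

theory Defs
  imports Complex_Main "HOL-Library.List_Lexorder"
begin

definition lattice_adj :: "nat \<Rightarrow> int list \<Rightarrow> int list \<Rightarrow> bool" where
  "lattice_adj l u v \<longleftrightarrow> length u = l \<and> length v = l \<and> (\<Sum>i<l. (u!i - v!i)^2) = 1"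

definition lattice_subgraph :: "nat \<Rightarrow> int list set \<Rightarrow> int list set set \<Rightarrow> bool" where
  "lattice_subgraph l V E \<longleftrightarrow> finite V \<and> (\<forall>x\<in>V. length x = l) \<and>
     E \<subseteq> {{u, v} | u v. u \<in> V \<and> v \<in> V \<and> lattice_adj l u v}"

text \<open>Independence complex: all independent vertex sets (including the empty face).\<close>
definition ind_complex :: "'v set \<Rightarrow> 'v set set \<Rightarrow> 'v set set" where
  "ind_complex V E = {S. S \<subseteq> V \<and> (\<forall>u\<in>S. \<forall>v\<in>S. {u, v} \<notin> E)}"

text \<open>Simplicial k-chains with coefficients in a field: functions on k-faces
  (faces with k+1 vertices; the empty face is the unique (-1)-face: augmented complex).\<close>
definition chains :: "'v set set \<Rightarrow> int \<Rightarrow> ('v set \<Rightarrow> 'a::field) set" where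
  "chains K k = {c. \<forall>S. c S \<noteq> 0 \<longrightarrow> S \<in> K \<and> int (card S) = k + 1}"

text \<open>Simplicial boundary, simplices oriented by the linear order on vertices:
  removing the i-th smallest vertex carries sign (-1)^i.\<close>
definition bd :: "'v::linorder set set \<Rightarrow> ('v set \<Rightarrow> 'a::field) \<Rightarrow> 'v set \<Rightarrow> 'a" where
  "bd K c T = (if T \<in> K then
      (\<Sum>v\<in>(\<Union>K) - T. if insert v T \<in> K
          then (-1) ^ card {w\<in>T. w < v} * c (insert v T) else 0)
     else 0)"

definition reduced_homology_trivial ::
  "'a::field itself \<Rightarrow> 'v::linorder set set \<Rightarrow> int \<Rightarrow> bool" where
  "reduced_homology_trivial TYPE('a) K k \<longleftrightarrow>
     (\<forall>c::'v set \<Rightarrow> 'a. c \<in> chains K k \<and> bd K c = (\<lambda>_. 0) \<longrightarrow>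
        (\<exists>d \<in> chains K (k + 1). bd K d = c))"

end

theory Submission
  imports Defs "HOL-Library.FuncSet"
begin

(* The faces of ind(G) avoiding a vertex v form ind(G - v), and those through v form the cone
   from v over ind(G - N[v]).  Hence H_k(ind G) = 0 as soon as H_k(ind(G - v)) = 0 and
   H_(k-1)(ind(G - N[v])) = 0: a k-cycle is first corrected by the cone over a filling of its
   link part, and what remains is a cycle of ind(G - v).
   If A is a 2-packing of G and v is not in A, then A survives in G - v and loses at most one
   point in G - N[v], so induction on |V| gives H_k(ind G) = 0 for k < |A| - 1; the base case
   V = A is a full simplex, i.e. a cone.
   In Z^l a unit step in coordinate i changes the weight x_0 + 2 x_1 + ... + l x_(l-1) by
   +-(i+1), and 0, +-1, ..., +-l are pairwise incongruent modulo 2l+1.  So every residue class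
   of the weight is a 2-packing, and one of them contains at least |V|/(2l+1) vertices. *)

section \<open>Simplicial chains\<close>

(* The sign with which the face insert u T enters bd at T. *)
definition insertion_sign :: "'v::linorder set \<Rightarrow> 'v \<Rightarrow> 'a::field" where
  "insertion_sign T u = (-1) ^ card {w\<in>T. w < u}"

lemma insertion_sign_mult_self [simp]: "insertion_sign T u * insertion_sign T u = (1::'a::field)"
  unfolding insertion_sign_def by (simp flip: power_mult_distrib)

lemma insertion_sign_mult_self_cancel [simp]:
  "insertion_sign T u * (insertion_sign T u * x) = (x::'a::field)"
  by (simp flip: mult.assoc)

lemma insertion_sign_nonzero [simp]: "insertion_sign T u \<noteq> (0::'a::field)"
  unfolding insertion_sign_def by simp

lemma insertion_sign_insert:
  assumes "finite T" "u \<notin> T"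
  shows "insertion_sign (insert u T) w =
    (if u < w then - insertion_sign T w else (insertion_sign T w :: 'a::field))"
proof (cases "u < w")
  case True
  then have "{x\<in>insert u T. x < w} = insert u {x\<in>T. x < w}" by auto
  then show ?thesis using True assms by (simp add: insertion_sign_def)
next
  case False
  then have "{x\<in>insert u T. x < w} = {x\<in>T. x < w}" by auto
  then show ?thesis using False by (simp add: insertion_sign_def)
qed

lemma insertion_sign_insert_swap:
  assumes "finite T" "u \<notin> T" "w \<notin> T" "u \<noteq> w"
  shows "insertion_sign T u * insertion_sign (insert u T) w =
    - (insertion_sign T w * insertion_sign (insert w T) u :: 'a::field)"
  using assms by (cases "u < w") (auto simp: insertion_sign_insert)

lemma insertion_sign_insert_swap':
  assumes "finite T" "u \<notin> T" "w \<notin> T" "u \<noteq> w"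
  shows "insertion_sign (insert w T) u =
    - insertion_sign T w * (insertion_sign T u * insertion_sign (insert u T) w :: 'a::field)"
  using assms by (cases "u < w") (auto simp: insertion_sign_insert)

definition simplicial_complex :: "'v set \<Rightarrow> 'v set set \<Rightarrow> bool" where
  "simplicial_complex V K \<longleftrightarrow> finite V \<and> (\<forall>S\<in>K. S \<subseteq> V \<and> (\<forall>T\<subseteq>S. T \<in> K))"

lemma simplicial_complex_finite: "simplicial_complex V K \<Longrightarrow> finite V"
  by (simp add: simplicial_complex_def)

lemma simplicial_complex_face_subset: "simplicial_complex V K \<Longrightarrow> S \<in> K \<Longrightarrow> S \<subseteq> V"
  by (simp add: simplicial_complex_def)

lemma simplicial_complex_subface: "simplicial_complex V K \<Longrightarrow> S \<in> K \<Longrightarrow> T \<subseteq> S \<Longrightarrow> T \<in> K"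
  by (simp add: simplicial_complex_def)

lemma simplicial_complex_finite_face: "simplicial_complex V K \<Longrightarrow> S \<in> K \<Longrightarrow> finite S"
  by (meson finite_subset simplicial_complex_def)

lemma chains_outside: "c \<in> chains K k \<Longrightarrow> S \<notin> K \<Longrightarrow> c S = 0"
  by (auto simp: chains_def)

lemma chains_add: "c \<in> chains K k \<Longrightarrow> d \<in> chains K k \<Longrightarrow> (\<lambda>S. c S + d S) \<in> chains K k"
  by (simp add: chains_def) (metis add.right_neutral)

lemma chains_diff: "c \<in> chains K k \<Longrightarrow> d \<in> chains K k \<Longrightarrow> (\<lambda>S. c S - d S) \<in> chains K k"
  by (simp add: chains_def) (metis diff_zero)

lemma chains_uminus: "c \<in> chains K k \<Longrightarrow> (\<lambda>S. - c S) \<in> chains K k"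
  by (simp add: chains_def)

lemma bd_outside: "T \<notin> K \<Longrightarrow> bd K c T = 0"
  by (simp add: bd_def)

lemma bd_add: "bd K (\<lambda>S. c S + d S) = (\<lambda>T. bd K c T + bd K d T)"
  by (rule ext) (auto simp: bd_def sum.distrib[symmetric] distrib_left intro!: sum.cong)

lemma bd_diff: "bd K (\<lambda>S. c S - d S) = (\<lambda>T. bd K c T - bd K d T)"
  by (rule ext) (auto simp: bd_def sum_subtractf[symmetric] right_diff_distrib intro!: sum.cong)

lemma bd_uminus: "bd K (\<lambda>S. - c S) = (\<lambda>T. - bd K c T)"
  by (rule ext) (auto simp: bd_def sum_negf[symmetric] intro!: sum.cong)

lemma bd_zero: "bd K (\<lambda>_. 0) = (\<lambda>_. 0)"
  by (rule ext) (simp add: bd_def cong: if_cong)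

lemma bd_eq_sum:
  assumes K: "simplicial_complex V K" and T: "T \<in> K"
  shows "bd K c T =
    (\<Sum>u\<in>V - T. if insert u T \<in> K then insertion_sign T u * c (insert u T) else 0)"
proof -
  have "\<Union>K - T \<subseteq> V - T" using K simplicial_complex_face_subset by blast
  then have "(\<Sum>u\<in>\<Union>K - T. if insert u T \<in> K then insertion_sign T u * c (insert u T) else 0)
      = (\<Sum>u\<in>V - T. if insert u T \<in> K then insertion_sign T u * c (insert u T) else 0)"
    using simplicial_complex_finite[OF K] by (intro sum.mono_neutral_left) auto
  then show ?thesis using T by (simp add: bd_def insertion_sign_def cong: if_cong)
qed

lemma bd_chains:
  assumes K: "simplicial_complex V K" and c: "c \<in> chains K (k + 1)"
  shows "bd K c \<in> chains K k"
  unfolding chains_def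
proof (intro CollectI allI impI)
  fix S assume nz: "bd K c S \<noteq> 0"
  then have S: "S \<in> K" using bd_outside by blast
  then obtain u where u: "u \<in> V - S" and "insert u S \<in> K" "c (insert u S) \<noteq> 0"
    using nz by (auto simp: bd_eq_sum[OF K] elim!: sum.not_neutral_contains_not_neutral split: if_splits)
  then have "int (card (insert u S)) = k + 1 + 1" using c by (simp add: chains_def)
  moreover have "card (insert u S) = Suc (card S)"
    using u simplicial_complex_finite_face[OF K S] by simp
  ultimately show "S \<in> K \<and> int (card S) = k + 1" using S by simp
qed

lemma sum_sum_antisym_eq_0:
  fixes g :: "'b \<Rightarrow> 'b \<Rightarrow> 'a::ab_group_add"
  assumes "finite X" "\<And>u. u \<in> X \<Longrightarrow> g u u = 0"
    "\<And>u w. u \<in> X \<Longrightarrow> w \<in> X \<Longrightarrow> u \<noteq> w \<Longrightarrow> g w u = - g u w"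
  shows "(\<Sum>u\<in>X. \<Sum>w\<in>X. g u w) = 0"
  using assms
proof (induction X rule: finite_induct)
  case empty
  show ?case by simp
next
  case (insert x X)
  have "g u x = - g x u" if "u \<in> X" for u
    using insert.prems(2)[of x u] insert.hyps(2) that by auto
  then have "(\<Sum>u\<in>X. g u x) = - (\<Sum>u\<in>X. g x u)"
    by (simp add: sum_negf cong: sum.cong)
  moreover have "(\<Sum>u\<in>X. \<Sum>w\<in>X. g u w) = 0"
  proof (rule insert.IH)
    show "g u u = 0" if "u \<in> X" for u
      using insert.prems(1)[of u] that by simp
    show "g w u = - g u w" if "u \<in> X" "w \<in> X" "u \<noteq> w" for u w
      using insert.prems(2)[of u w] that by simp
  qed
  ultimately show ?case
    using insert.hyps insert.prems(1)[of x] by (simp add: sum.distrib)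
qed

lemma bd_bd:
  fixes c :: "'v::linorder set \<Rightarrow> 'a::field"
  assumes K: "simplicial_complex V K"
  shows "bd K (bd K c) = (\<lambda>T. 0)"
proof
  fix T
  show "bd K (bd K c) T = 0"
  proof (cases "T \<in> K")
    case False then show ?thesis by (rule bd_outside)
  next
    case True
    have finV: "finite V" using K by (rule simplicial_complex_finite)
    have finT: "finite T" using K True by (rule simplicial_complex_finite_face)
    define g where "g u w = (if u \<noteq> w \<and> insert w (insert u T) \<in> K
       then insertion_sign T u * insertion_sign (insert u T) w * c (insert w (insert u T))
       else (0::'a))" for u w
    have inner: "(if insert u T \<in> K then insertion_sign T u * bd K c (insert u T) else 0)
        = (\<Sum>w\<in>V - T. g u w)" if u: "u \<in> V - T" for u
    proof (cases "insert u T \<in> K")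
      case False
      then have "g u w = 0" for w
        using simplicial_complex_subface[OF K, of "insert w (insert u T)" "insert u T"]
        by (auto simp: g_def)
      then show ?thesis using False by simp
    next
      case uT: True
      have "(\<Sum>w\<in>V - T. g u w) = (\<Sum>w\<in>V - insert u T. g u w)"
        using finV by (intro sum.mono_neutral_right) (auto simp: g_def)
      also have "\<dots> = insertion_sign T u * bd K c (insert u T)"
        unfolding bd_eq_sum[OF K uT] sum_distrib_left by (rule sum.cong) (auto simp: g_def mult.assoc)
      finally show ?thesis using uT by simp
    qed
    have "bd K (bd K c) T = (\<Sum>u\<in>V - T. \<Sum>w\<in>V - T. g u w)"
      unfolding bd_eq_sum[OF K True] by (rule sum.cong) (simp_all add: inner)
    also have "\<dots> = 0"
    proof (rule sum_sum_antisym_eq_0)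
      show "finite (V - T)" using finV by simp
      show "g w u = - g u w" if "u \<in> V - T" "w \<in> V - T" "u \<noteq> w" for u w
      proof -
        have "insertion_sign T w * insertion_sign (insert w T) u =
            - (insertion_sign T u * insertion_sign (insert u T) w :: 'a)"
          using that finT by (intro insertion_sign_insert_swap) auto
        then show ?thesis by (simp add: g_def insert_commute)
      qed
    qed (simp add: g_def)
    finally show ?thesis .
  qed
qed

lemma reduced_homology_trivial_below:
  fixes K :: "'v::linorder set set"
  assumes "k < -1"
  shows "reduced_homology_trivial TYPE('a::field) K k"
proof -
  have "c = (\<lambda>_. 0)" if "c \<in> chains K k" for c :: "'v set \<Rightarrow> 'a"
    using that assms by (fastforce simp: chains_def)
  moreover have "(\<lambda>_. 0) \<in> chains K (k + 1)" "bd K (\<lambda>_. 0 :: 'a) = (\<lambda>_. 0)"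
    by (simp_all add: chains_def bd_zero)
  ultimately show ?thesis unfolding reduced_homology_trivial_def by blast
qed

section \<open>Cones\<close>

lemma bd_chain_through_vertex:
  assumes K: "simplicial_complex V K" and a: "a \<in> V" and T: "T \<in> K" "a \<notin> T"
    and f: "\<And>S. a \<notin> S \<Longrightarrow> f S = 0"
  shows "bd K f T = (if insert a T \<in> K then insertion_sign T a * f (insert a T) else 0)"
proof -
  have "bd K f T = (\<Sum>u\<in>V - T. if insert u T \<in> K then insertion_sign T u * f (insert u T) else 0)"
    using K T(1) by (rule bd_eq_sum)
  also have "\<dots> = (\<Sum>u\<in>{a}. if insert u T \<in> K then insertion_sign T u * f (insert u T) else 0)"
    using simplicial_complex_finite[OF K] a T(2) f by (intro sum.mono_neutral_right) auto
  finally show ?thesis by simp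
qed

lemma cycle_through_vertex_eq_0:
  assumes K: "simplicial_complex V K" and a: "a \<in> V"
    and outside: "\<And>S. S \<notin> K \<Longrightarrow> f S = 0" and off_a: "\<And>S. a \<notin> S \<Longrightarrow> f S = 0"
    and cycle: "bd K f = (\<lambda>_. 0)"
  shows "f = (\<lambda>_. 0)"
proof
  fix S
  show "f S = 0"
  proof (cases "S \<in> K \<and> a \<in> S")
    case True
    then have "S - {a} \<in> K" using simplicial_complex_subface[OF K] by blast
    from bd_chain_through_vertex[OF K a this _ off_a] True
    have "bd K f (S - {a}) = insertion_sign (S - {a}) a * f S"
      by (simp add: insert_absorb)
    then show ?thesis using cycle by (simp add: fun_eq_iff)
  qed (use outside off_a in blast)
qed

(* Chains supported on faces through v correspond to chains on the link of v; the signs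
   are chosen to match bd (see bd_ind_complex_insert). *)
definition cone_chain :: "'v::linorder \<Rightarrow> ('v set \<Rightarrow> 'a::field) \<Rightarrow> 'v set \<Rightarrow> 'a" where
  "cone_chain v c S = (if v \<in> S then insertion_sign (S - {v}) v * c (S - {v}) else 0)"

definition link_chain :: "'v::linorder \<Rightarrow> ('v set \<Rightarrow> 'a::field) \<Rightarrow> 'v set \<Rightarrow> 'a" where
  "link_chain v c S = (if v \<in> S then 0 else insertion_sign S v * c (insert v S))"

lemma link_chain_cone_chain:
  assumes "\<And>S. v \<in> S \<Longrightarrow> c S = 0"
  shows "link_chain v (cone_chain v c) = c"
proof
  fix S
  show "link_chain v (cone_chain v c) S = c S"
    using assms[of S] by (cases "v \<in> S") (simp_all add: link_chain_def cone_chain_def)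
qed

lemma cone_chain_chains:
  assumes K: "simplicial_complex V K" and c: "c \<in> chains L k"
    and cone: "\<And>T. T \<in> L \<Longrightarrow> v \<notin> T \<Longrightarrow> insert v T \<in> K"
  shows "cone_chain v c \<in> chains K (k + 1)"
  unfolding chains_def
proof (intro CollectI allI impI)
  fix S assume "cone_chain v c S \<noteq> 0"
  then have v: "v \<in> S" and "c (S - {v}) \<noteq> 0" by (auto simp: cone_chain_def split: if_splits)
  then have "S - {v} \<in> L" and card: "int (card (S - {v})) = k + 1"
    using c by (auto simp: chains_def)
  then have S: "S \<in> K" using cone[of "S - {v}"] v by (simp add: insert_absorb)
  have "card S = Suc (card (S - {v}))"
    using simplicial_complex_finite_face[OF K S] v by (rule card_Suc_Diff1[symmetric])
  then show "S \<in> K \<and> int (card S) = k + 1 + 1" using S card by simp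
qed

lemma link_chain_chains:
  assumes K: "simplicial_complex V K" and c: "c \<in> chains K k"
    and link: "\<And>T. v \<notin> T \<Longrightarrow> insert v T \<in> K \<Longrightarrow> T \<in> L"
  shows "link_chain v c \<in> chains L (k - 1)"
  unfolding chains_def
proof (intro CollectI allI impI)
  fix S assume "link_chain v c S \<noteq> 0"
  then have v: "v \<notin> S" and "c (insert v S) \<noteq> 0" by (auto simp: link_chain_def split: if_splits)
  then have vS: "insert v S \<in> K" and card: "int (card (insert v S)) = k + 1"
    using c by (auto simp: chains_def)
  have "finite S" using simplicial_complex_finite_face[OF K vS] by simp
  then show "S \<in> L \<and> int (card S) = k - 1 + 1" using link v vS card by simp
qed

lemma reduced_homology_trivial_cone:
  fixes K :: "'v::linorder set set"
  assumes K: "simplicial_complex V K" and a: "a \<in> V"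
    and cone: "\<And>T. T \<in> K \<Longrightarrow> insert a T \<in> K"
  shows "reduced_homology_trivial TYPE('a::field) K k"
  unfolding reduced_homology_trivial_def
proof (intro allI impI)
  fix c :: "'v set \<Rightarrow> 'a" assume "c \<in> chains K k \<and> bd K c = (\<lambda>_. 0)"
  then have c: "c \<in> chains K k" and cycle: "bd K c = (\<lambda>_. 0)" by auto
  define d where "d = cone_chain a c"
  have d: "d \<in> chains K (k + 1)" unfolding d_def using K c cone by (rule cone_chain_chains)
  have bd_d: "bd K d T = c T" if "T \<in> K" "a \<notin> T" for T
  proof -
    have "bd K d T = insertion_sign T a * d (insert a T)"
      using bd_chain_through_vertex[OF K a that, of d] cone[OF that(1)] by (simp add: d_def cone_chain_def)
    then show ?thesis using that(2) by (simp add: d_def cone_chain_def)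
  qed
  have "(\<lambda>S. c S - bd K d S) = (\<lambda>_. 0)"
  proof (rule cycle_through_vertex_eq_0[OF K a])
    show "c S - bd K d S = 0" if "S \<notin> K" for S
      using that c by (simp add: chains_outside bd_outside)
    show "c S - bd K d S = 0" if "a \<notin> S" for S
      using that c bd_d by (cases "S \<in> K") (simp_all add: chains_outside bd_outside)
    show "bd K (\<lambda>S. c S - bd K d S) = (\<lambda>_. 0)"
      by (simp add: bd_diff bd_bd[OF K] cycle)
  qed
  then have "bd K d = c" by (simp add: fun_eq_iff)
  with d show "\<exists>d\<in>chains K (k + 1). bd K d = c" by blast
qed

section \<open>Independence complexes\<close>

lemma ind_complex_simplicial: "finite V \<Longrightarrow> simplicial_complex V (ind_complex V E)"
  by (auto simp: simplicial_complex_def ind_complex_def)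

lemma reduced_homology_trivial_ind_complex_edgeless:
  fixes V :: "'v::linorder set"
  assumes fin: "finite V" and edgeless: "\<And>u w. u \<in> V \<Longrightarrow> w \<in> V \<Longrightarrow> {u, w} \<notin> E"
    and k: "k < int (card V) - 1"
  shows "reduced_homology_trivial TYPE('a::field) (ind_complex V E) k"
proof (cases "V = {}")
  case True
  then show ?thesis using k by (simp add: reduced_homology_trivial_below)
next
  case False
  then obtain a where a: "a \<in> V" by blast
  with ind_complex_simplicial[OF fin] show ?thesis
  proof (rule reduced_homology_trivial_cone)
    show "insert a T \<in> ind_complex V E" if "T \<in> ind_complex V E" for T
      using that a edgeless edgeless[OF a a] by (auto simp: ind_complex_def)
  qed
qed

lemma ind_complex_delete: "S \<in> ind_complex (V - {v}) E \<longleftrightarrow> S \<in> ind_complex V E \<and> v \<notin> S"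
  by (auto simp: ind_complex_def)

lemma chains_ind_complex_delete:
  "c \<in> chains (ind_complex (V - {v}) E) k \<longleftrightarrow>
    c \<in> chains (ind_complex V E) k \<and> (\<forall>S. v \<in> S \<longrightarrow> c S = 0)"
  by (auto simp: chains_def ind_complex_delete)

lemma bd_ind_complex_delete:
  fixes c :: "'v::linorder set \<Rightarrow> 'a::field"
  assumes fin: "finite V" and c: "\<And>S. v \<in> S \<Longrightarrow> c S = 0"
  shows "bd (ind_complex V E) c = bd (ind_complex (V - {v}) E) c"
proof
  fix T
  let ?K = "ind_complex V E" and ?D = "ind_complex (V - {v}) E"
  have K: "simplicial_complex V ?K" and D: "simplicial_complex (V - {v}) ?D"
    using fin by (simp_all add: ind_complex_simplicial)
  show "bd ?K c T = bd ?D c T"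
  proof (cases "T \<in> ?D")
    case True
    then have T: "T \<in> ?K" "v \<notin> T" by (simp_all add: ind_complex_delete)
    have "bd ?K c T = (\<Sum>u\<in>V - T. if insert u T \<in> ?K then insertion_sign T u * c (insert u T) else 0)"
      using K T(1) by (rule bd_eq_sum)
    also have "\<dots> = (\<Sum>u\<in>(V - {v}) - T. if insert u T \<in> ?D then insertion_sign T u * c (insert u T) else 0)"
      using fin c T(2) by (intro sum.mono_neutral_cong_right) (auto simp: ind_complex_delete)
    also have "\<dots> = bd ?D c T"
      using D True by (rule bd_eq_sum[symmetric])
    finally show ?thesis .
  next
    case False
    then have "T \<notin> ?K \<or> v \<in> T" by (simp add: ind_complex_delete)
    then have "bd ?K c T = 0"
      using c by (cases "T \<in> ?K") (auto simp: bd_eq_sum[OF K] bd_outside intro!: sum.neutral)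
    then show ?thesis using False by (simp add: bd_outside)
  qed
qed

(* V minus the closed neighbourhood N[v]; its independence complex is the link of v. *)
definition non_neighbours :: "'v set \<Rightarrow> 'v set set \<Rightarrow> 'v \<Rightarrow> 'v set" where
  "non_neighbours V E v = {u \<in> V. u \<noteq> v \<and> {u, v} \<notin> E}"

lemma insert_mem_ind_complex_iff:
  assumes "v \<in> V" "{v} \<notin> E" "v \<notin> T"
  shows "insert v T \<in> ind_complex V E \<longleftrightarrow> T \<in> ind_complex (non_neighbours V E v) E"
  using assms by (auto simp: ind_complex_def non_neighbours_def insert_commute)

lemma ind_complex_non_neighbours_notin:
  "T \<in> ind_complex (non_neighbours V E v) E \<Longrightarrow> v \<notin> T"
  by (auto simp: ind_complex_def non_neighbours_def)

lemma bd_ind_complex_insert: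
  fixes c :: "'v::linorder set \<Rightarrow> 'a::field"
  assumes fin: "finite V" and v: "v \<in> V" "{v} \<notin> E"
    and T: "T \<in> ind_complex (non_neighbours V E v) E"
  shows "bd (ind_complex V E) c (insert v T) =
    - insertion_sign T v * bd (ind_complex (non_neighbours V E v) E) (link_chain v c) T"
proof -
  let ?K = "ind_complex V E" and ?N = "non_neighbours V E v"
  let ?L = "ind_complex ?N E"
  have K: "simplicial_complex V ?K" and L: "simplicial_complex ?N ?L"
    using fin by (simp_all add: ind_complex_simplicial non_neighbours_def)
  have vT: "v \<notin> T" using T by (rule ind_complex_non_neighbours_notin)
  have finT: "finite T" using L T by (rule simplicial_complex_finite_face)
  have vT_K: "insert v T \<in> ?K" using insert_mem_ind_complex_iff[OF v vT] T by blast
  have "bd ?K c (insert v T) = (\<Sum>u\<in>V - insert v T. if insert u (insert v T) \<in> ?K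
      then insertion_sign (insert v T) u * c (insert u (insert v T)) else 0)"
    using K vT_K by (rule bd_eq_sum)
  also have "\<dots> = (\<Sum>u\<in>V - insert v T. - insertion_sign T v *
      (if insert u T \<in> ?L then insertion_sign T u * link_chain v c (insert u T) else 0))"
  proof (rule sum.cong)
    fix u assume u: "u \<in> V - insert v T"
    have "insertion_sign (insert v T) u =
        - insertion_sign T v * (insertion_sign T u * insertion_sign (insert u T) v :: 'a)"
      using u vT finT by (intro insertion_sign_insert_swap') auto
    moreover have "insert u (insert v T) \<in> ?K \<longleftrightarrow> insert u T \<in> ?L"
      using insert_mem_ind_complex_iff[OF v, of "insert u T"] u vT by (auto simp: insert_commute)
    ultimately show "(if insert u (insert v T) \<in> ?K
        then insertion_sign (insert v T) u * c (insert u (insert v T)) else 0) =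
      - insertion_sign T v *
        (if insert u T \<in> ?L then insertion_sign T u * link_chain v c (insert u T) else 0)"
      using u vT by (auto simp: link_chain_def insert_commute mult.assoc)
  qed simp
  also have "\<dots> = - insertion_sign T v *
      (\<Sum>u\<in>?N - T. if insert u T \<in> ?L then insertion_sign T u * link_chain v c (insert u T) else 0)"
    unfolding sum_distrib_left[symmetric] using fin L
    by (intro arg_cong[where f = "(*) _"] sum.mono_neutral_right)
      (auto simp: non_neighbours_def dest: simplicial_complex_face_subset)
  also have "\<dots> = - insertion_sign T v * bd ?L (link_chain v c) T"
    using L T by (simp add: bd_eq_sum)
  finally show ?thesis .
qed

lemma ind_complex_cycle_homologous_off_vertex:
  fixes c :: "'v::linorder set \<Rightarrow> 'a::field"
  assumes fin: "finite V" and v: "v \<in> V" "{v} \<notin> E"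
    and link: "reduced_homology_trivial TYPE('a) (ind_complex (non_neighbours V E v) E) (k - 1)"
    and c: "c \<in> chains (ind_complex V E) k" and cycle: "bd (ind_complex V E) c = (\<lambda>_. 0)"
  obtains d where "d \<in> chains (ind_complex V E) (k + 1)"
    "\<And>S. v \<in> S \<Longrightarrow> bd (ind_complex V E) d S = c S"
proof -
  let ?K = "ind_complex V E" and ?L = "ind_complex (non_neighbours V E v) E"
  have K: "simplicial_complex V ?K" using fin by (rule ind_complex_simplicial)
  have "link_chain v c \<in> chains ?L (k - 1)"
    using K c by (rule link_chain_chains) (use insert_mem_ind_complex_iff[OF v] in blast)
  moreover have "bd ?L (link_chain v c) = (\<lambda>_. 0)"
  proof
    fix T show "bd ?L (link_chain v c) T = 0"
      using bd_ind_complex_insert[OF fin v, of T c] cycle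
      by (cases "T \<in> ?L") (simp_all add: bd_outside)
  qed
  ultimately obtain b where b: "b \<in> chains ?L k" "bd ?L b = link_chain v c"
    using link unfolding reduced_homology_trivial_def by fastforce
  have b_v: "b S = 0" if "v \<in> S" for S
    using b(1) that ind_complex_non_neighbours_notin by (fastforce simp: chains_def)
  define d where "d = cone_chain v (\<lambda>S. - b S)"
  have d: "d \<in> chains ?K (k + 1)"
    unfolding d_def using K chains_uminus[OF b(1)]
    by (rule cone_chain_chains) (use insert_mem_ind_complex_iff[OF v] in blast)
  have bd_d: "bd ?K d (insert v T) = c (insert v T)" if T: "T \<in> ?L" for T
  proof -
    have "link_chain v d = (\<lambda>S. - b S)"
      unfolding d_def using b_v by (intro link_chain_cone_chain) simp
    then have "bd ?K d (insert v T) = insertion_sign T v * link_chain v c T"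
      using bd_ind_complex_insert[OF fin v T, of d] b(2) by (simp add: bd_uminus)
    also have "\<dots> = c (insert v T)"
      using ind_complex_non_neighbours_notin[OF T] by (simp add: link_chain_def)
    finally show ?thesis .
  qed
  have "bd ?K d S = c S" if "v \<in> S" for S
  proof (cases "S \<in> ?K")
    case True
    then have "S - {v} \<in> ?L" using insert_mem_ind_complex_iff[OF v, of "S - {v}"] that
      by (simp add: insert_absorb)
    then show ?thesis using bd_d[of "S - {v}"] that by (simp add: insert_absorb)
  qed (use c in \<open>simp add: chains_outside bd_outside\<close>)
  with d show ?thesis by (rule that)
qed

lemma reduced_homology_trivial_ind_complex_split:
  fixes V :: "'v::linorder set"
  assumes fin: "finite V" and v: "v \<in> V" "{v} \<notin> E"
    and delete: "reduced_homology_trivial TYPE('a::field) (ind_complex (V - {v}) E) k"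
    and link: "reduced_homology_trivial TYPE('a) (ind_complex (non_neighbours V E v) E) (k - 1)"
  shows "reduced_homology_trivial TYPE('a) (ind_complex V E) k"
  unfolding reduced_homology_trivial_def
proof (intro allI impI)
  let ?K = "ind_complex V E" and ?D = "ind_complex (V - {v}) E"
  have K: "simplicial_complex V ?K" using fin by (rule ind_complex_simplicial)
  fix c :: "'v set \<Rightarrow> 'a" assume "c \<in> chains ?K k \<and> bd ?K c = (\<lambda>_. 0)"
  then have c: "c \<in> chains ?K k" and cycle: "bd ?K c = (\<lambda>_. 0)" by auto
  obtain d where d: "d \<in> chains ?K (k + 1)" "\<And>S. v \<in> S \<Longrightarrow> bd ?K d S = c S"
    using ind_complex_cycle_homologous_off_vertex[OF fin v link c cycle] by blast
  define r where "r = (\<lambda>S. c S - bd ?K d S)"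
  have r_v: "r S = 0" if "v \<in> S" for S
    using d(2)[OF that] by (simp add: r_def)
  have r: "r \<in> chains ?D k"
    unfolding chains_ind_complex_delete r_def
    using r_v chains_diff[OF c bd_chains[OF K d(1)]] by (simp add: r_def)
  have "bd ?D r = bd ?K r"
    using bd_ind_complex_delete[OF fin r_v, where E = E] by (rule sym)
  also have "\<dots> = (\<lambda>_. 0)"
    unfolding r_def bd_diff bd_bd[OF K] cycle by simp
  finally obtain e where e: "e \<in> chains ?D (k + 1)" "bd ?D e = r"
    using delete r unfolding reduced_homology_trivial_def by blast
  then have e_K: "e \<in> chains ?K (k + 1)" and e_v: "\<And>S. v \<in> S \<Longrightarrow> e S = 0"
    by (simp_all add: chains_ind_complex_delete)
  have "bd ?K e = r"
    using bd_ind_complex_delete[OF fin e_v, where E = E] e(2) by simp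
  then have "bd ?K (\<lambda>S. e S + d S) = c" by (simp add: bd_add r_def)
  with chains_add[OF e_K d(1)] show "\<exists>d\<in>chains ?K (k + 1). bd ?K d = c" by blast
qed

section \<open>Two-packings\<close>

definition two_packing :: "'v set set \<Rightarrow> 'v set \<Rightarrow> bool" where
  "two_packing E A \<longleftrightarrow>
     (\<forall>a\<in>A. \<forall>b\<in>A. a \<noteq> b \<longrightarrow> {a, b} \<notin> E \<and> (\<forall>x. {a, x} \<in> E \<longrightarrow> {b, x} \<notin> E))"

lemma two_packing_subset: "two_packing E A \<Longrightarrow> B \<subseteq> A \<Longrightarrow> two_packing E B"
  by (auto simp: two_packing_def)

lemma two_packing_card_non_neighbours:
  assumes A: "two_packing E A" "finite A" "A \<subseteq> V" and v: "v \<notin> A"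
  shows "card A \<le> card (A \<inter> non_neighbours V E v) + 1"
proof -
  have "card (A - non_neighbours V E v) \<le> card {a \<in> A. {a, v} \<in> E}"
    using A v by (intro card_mono) (auto simp: non_neighbours_def)
  also have "\<dots> \<le> 1"
    using A(1,2) by (auto simp: card_le_Suc0_iff_eq two_packing_def)
  finally have "card (A - non_neighbours V E v) \<le> 1" .
  moreover have "card A \<le> card (A \<inter> non_neighbours V E v) + card (A - non_neighbours V E v)"
    by (metis Int_Diff_Un card_Un_le)
  ultimately show ?thesis by linarith
qed

lemma reduced_homology_trivial_ind_complex_two_packing:
  fixes V :: "'v::linorder set"
  assumes "finite V" "\<And>x. {x} \<notin> E" "A \<subseteq> V" "two_packing E A" "k < int (card A) - 1"
  shows "reduced_homology_trivial TYPE('a::field) (ind_complex V E) k"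
  using assms
proof (induction "card V" arbitrary: V A k rule: less_induct)
  case less
  have fin: "finite V" and loop_free: "\<And>x. {x} \<notin> E" and A: "A \<subseteq> V" "two_packing E A"
    using less.prems by blast+
  show ?case
  proof (cases "V \<subseteq> A")
    case True
    with A(1) have "V = A" by blast
    have "{u, w} \<notin> E" if "u \<in> V" "w \<in> V" for u w
      using that \<open>V = A\<close> A(2) loop_free[of u] by (cases "u = w") (auto simp: two_packing_def)
    then show ?thesis
      using fin less.prems(5) \<open>V = A\<close> by (intro reduced_homology_trivial_ind_complex_edgeless) auto
  next
    case False
    then obtain v where v: "v \<in> V" "v \<notin> A" by blast
    let ?N = "non_neighbours V E v"
    have "reduced_homology_trivial TYPE('a) (ind_complex (V - {v}) E) k"
      using card_Diff1_less[OF fin v(1)] fin A v(2) loop_free less.prems(5)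
      by (intro less.hyps[of "V - {v}" A]) blast+
    moreover have "reduced_homology_trivial TYPE('a) (ind_complex ?N E) (k - 1)"
    proof (rule less.hyps[of ?N "A \<inter> ?N"])
      show "card ?N < card V"
        using fin v(1) by (intro psubset_card_mono) (auto simp: non_neighbours_def)
      show "k - 1 < int (card (A \<inter> ?N)) - 1"
        using two_packing_card_non_neighbours[OF A(2) finite_subset[OF A(1) fin] A(1) v(2)]
          less.prems(5) by linarith
      show "two_packing E (A \<inter> ?N)" using A(2) by (rule two_packing_subset) blast
      show "finite ?N" using fin by (simp add: non_neighbours_def)
      show "A \<inter> ?N \<subseteq> ?N" by blast
      show "{x} \<notin> E" for x by (rule loop_free)
    qed
    ultimately show ?thesis
      by (rule reduced_homology_trivial_ind_complex_split[OF fin v(1) loop_free])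
  qed
qed

section \<open>Subgraphs of the integer lattice\<close>

lemma lattice_adj_sym: "lattice_adj l u v \<Longrightarrow> lattice_adj l v u"
  unfolding lattice_adj_def by (simp add: power2_commute)

lemma lattice_subgraph_edge:
  assumes "lattice_subgraph l V E" "{a, b} \<in> E"
  shows "lattice_adj l a b"
proof -
  obtain u v where "{a, b} = {u, v}" "lattice_adj l u v"
    using assms by (auto simp: lattice_subgraph_def)
  then show ?thesis by (auto simp: doubleton_eq_iff intro: lattice_adj_sym)
qed

lemma lattice_subgraph_loop_free: "lattice_subgraph l V E \<Longrightarrow> {x} \<notin> E"
  using lattice_subgraph_edge[of l V E x x] by (auto simp: lattice_adj_def)

lemma lattice_adj_unit_step:
  assumes "lattice_adj l u v"
  shows "\<exists>i<l. \<exists>\<delta>. (\<delta> = 1 \<or> \<delta> = -1) \<and> u = v[i := v ! i + \<delta>]"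
proof -
  define d where "d m = u ! m - v ! m" for m
  have len: "length u = l" "length v = l" and sum: "(\<Sum>m<l. (d m)\<^sup>2) = 1"
    using assms by (simp_all add: lattice_adj_def d_def)
  have "\<exists>i<l. d i \<noteq> 0"
  proof (rule ccontr)
    assume "\<not> (\<exists>i<l. d i \<noteq> 0)"
    then have "(\<Sum>m<l. (d m)\<^sup>2) = 0" by simp
    then show False using sum by simp
  qed
  then obtain i where i: "i < l" "d i \<noteq> 0" by blast
  have "(d i)\<^sup>2 + (\<Sum>m\<in>{..<l} - {i}. (d m)\<^sup>2) = 1"
    using sum i(1) by (simp add: sum.remove)
  moreover have "(d i)\<^sup>2 > 0" using i(2) by simp
  moreover have "(\<Sum>m\<in>{..<l} - {i}. (d m)\<^sup>2) \<ge> 0" by (intro sum_nonneg) simp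
  ultimately have di: "(d i)\<^sup>2 = 1" and rest: "(\<Sum>m\<in>{..<l} - {i}. (d m)\<^sup>2) = 0"
    by linarith+
  have "d m = 0" if "m < l" "m \<noteq> i" for m
    using rest that by (subst (asm) sum_nonneg_eq_0_iff) auto
  moreover have "d i = 1 \<or> d i = -1" using di by (simp add: power2_eq_1_iff)
  ultimately have "u = v[i := v ! i + d i]"
    using len i(1) by (intro nth_equalityI) (auto simp: d_def nth_list_update)
  then show ?thesis using i(1) \<open>d i = 1 \<or> d i = -1\<close> by blast
qed

definition lattice_weight :: "nat \<Rightarrow> int list \<Rightarrow> int" where
  "lattice_weight l x = (\<Sum>i<l. int (i + 1) * x ! i)"

lemma lattice_weight_update:
  assumes "i < l" "length v = l"
  shows "lattice_weight l (v[i := x]) = lattice_weight l v + int (i + 1) * (x - v ! i)"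
proof -
  have "lattice_weight l (v[i := x]) - lattice_weight l v = (\<Sum>m<l. int (m + 1) * (v[i := x] ! m - v ! m))"
    by (simp add: lattice_weight_def sum_subtractf[symmetric] right_diff_distrib)
  also have "\<dots> = (\<Sum>m<l. if m = i then int (i + 1) * (x - v ! i) else 0)"
    using assms by (intro sum.cong) (auto simp: nth_list_update)
  also have "\<dots> = int (i + 1) * (x - v ! i)" using assms(1) by simp
  finally show ?thesis by simp
qed

lemma lattice_adj_weight:
  assumes "lattice_adj l u v"
  obtains i \<delta> where "i < l" "\<delta> = 1 \<or> \<delta> = -1" "u = v[i := v ! i + \<delta>]"
    "lattice_weight l u = lattice_weight l v + int (i + 1) * \<delta>"
proof -
  obtain i \<delta> where "i < l" "\<delta> = 1 \<or> \<delta> = -1" "u = v[i := v ! i + \<delta>]"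
    using lattice_adj_unit_step[OF assms] by blast
  moreover have "length v = l" using assms by (simp add: lattice_adj_def)
  ultimately show ?thesis using that lattice_weight_update by simp
qed

lemma eq_if_dvd_diff_small:
  fixes x y :: int
  assumes "\<bar>x\<bar> \<le> int l" "\<bar>y\<bar> \<le> int l" "int (2 * l + 1) dvd x - y"
  shows "x = y"
proof (rule ccontr)
  assume "x \<noteq> y"
  then have "\<bar>int (2 * l + 1)\<bar> \<le> \<bar>x - y\<bar>" using assms(3) by (intro dvd_imp_le_int) auto
  then show False using assms(1,2) by linarith
qed

lemma lattice_weight_class_two_packing:
  assumes G: "lattice_subgraph l V E"
  shows "two_packing E {x \<in> V. lattice_weight l x mod int (2 * l + 1) = r}"
  unfolding two_packing_def
proof (intro ballI impI)
  fix a b assume "a \<in> {x \<in> V. lattice_weight l x mod int (2 * l + 1) = r}"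
    "b \<in> {x \<in> V. lattice_weight l x mod int (2 * l + 1) = r}" and "a \<noteq> b"
  then have same_class: "int (2 * l + 1) dvd lattice_weight l a - lattice_weight l b"
    by (intro mod_eq_dvd_iff[THEN iffD1]) simp
  have "{a, b} \<notin> E"
  proof
    assume "{a, b} \<in> E"
    then obtain i \<delta> where "i < l" "\<delta> = 1 \<or> \<delta> = -1"
      "lattice_weight l a = lattice_weight l b + int (i + 1) * \<delta>"
      using lattice_adj_weight[OF lattice_subgraph_edge[OF G]] by blast
    moreover from this same_class have "int (i + 1) * \<delta> = 0"
      by (intro eq_if_dvd_diff_small[of _ l]) auto
    ultimately show False by auto
  qed
  moreover have "{b, x} \<notin> E" if "{a, x} \<in> E" for x
  proof
    assume "{b, x} \<in> E"
    obtain i \<delta> where i: "i < l" "\<delta> = 1 \<or> \<delta> = -1" "a = x[i := x ! i + \<delta>]"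
      "lattice_weight l a = lattice_weight l x + int (i + 1) * \<delta>"
      using lattice_adj_weight[OF lattice_subgraph_edge[OF G \<open>{a, x} \<in> E\<close>]] by blast
    obtain j \<epsilon> where j: "j < l" "\<epsilon> = 1 \<or> \<epsilon> = -1" "b = x[j := x ! j + \<epsilon>]"
      "lattice_weight l b = lattice_weight l x + int (j + 1) * \<epsilon>"
      using lattice_adj_weight[OF lattice_subgraph_edge[OF G \<open>{b, x} \<in> E\<close>]] by blast
    have "int (i + 1) * \<delta> = int (j + 1) * \<epsilon>"
      using i j same_class by (intro eq_if_dvd_diff_small[of _ l]) auto
    with i(2) j(2) have "i = j \<and> \<delta> = \<epsilon>" by auto
    then show False using i(3) j(3) \<open>a \<noteq> b\<close> by simp
  qed
  ultimately show "{a, b} \<notin> E \<and> (\<forall>x. {a, x} \<in> E \<longrightarrow> {b, x} \<notin> E)" by blast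
qed

lemma lattice_subgraph_large_two_packing:
  assumes G: "lattice_subgraph l V E"
  obtains A where "A \<subseteq> V" "two_packing E A" "card V \<le> (2 * l + 1) * card A"
proof -
  let ?p = "int (2 * l + 1)"
  have maps: "(\<lambda>x. lattice_weight l x mod ?p) \<in> V \<rightarrow> {0..<?p}" by simp
  have "finite V" using G by (simp add: lattice_subgraph_def)
  from pigeonhole_card[OF maps this] obtain r where r:
    "card V \<le> card ((\<lambda>x. lattice_weight l x mod ?p) -` {r} \<inter> V) * card {0..<?p}"
    by auto
  have "(\<lambda>x. lattice_weight l x mod ?p) -` {r} \<inter> V = {x \<in> V. lattice_weight l x mod ?p = r}"
    by blast
  moreover have "card {0..<?p} = 2 * l + 1"
    by (simp only: card_atLeastLessThan_int nat_int diff_0_right)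
  ultimately have "card V \<le> card {x \<in> V. lattice_weight l x mod ?p = r} * (2 * l + 1)"
    using r by (simp only:)
  then show ?thesis
    using that[OF _ lattice_weight_class_two_packing[OF G]] by (simp add: mult.commute)
qed

theorem corollary6p14:
  fixes l :: nat and V :: "int list set" and E :: "int list set set" and k :: int
  assumes "l \<ge> 1"
    and "lattice_subgraph l V E"
    and "real_of_int k < real (card V) / real (2 * l + 1) - 1"
  shows "reduced_homology_trivial TYPE('a::field) (ind_complex V E) k"
proof -
  obtain A where A: "A \<subseteq> V" "two_packing E A" "card V \<le> (2 * l + 1) * card A"
    using lattice_subgraph_large_two_packing[OF assms(2)] by blast
  have "real (card V) \<le> real (2 * l + 1) * real (card A)"
    using A(3) by (simp only: of_nat_mult[symmetric] of_nat_le_iff)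
  then have "real (card V) / real (2 * l + 1) \<le> real (card A)"
    by (simp add: pos_divide_le_eq mult.commute)
  then have "k < int (card A) - 1" using assms(3) by linarith
  moreover have "finite V" using assms(2) by (simp add: lattice_subgraph_def)
  ultimately show ?thesis
    using reduced_homology_trivial_ind_complex_two_packing[OF _ lattice_subgraph_loop_free[OF assms(2)] A(1,2)]
    by blast
qed

end
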